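(* Let $(A,B,E)$ be a finite bipartite graph and let $\alpha\in(0,1)$. Let $T\subseteq A$ be $\alpha$-separable, i.e., there exist $S\subseteq B$ with $|S|\ge\alpha|B|$ and disjoint subsets $T_0',T_1'\subseteq T$ with $|T_0'|\ge\alpha|T|$, $|T_1'|\ge\alpha|T|$ and $|d(S,T_0')-d(S,T_1')|\ge\alpha$. Then there are $S\subseteq B$ with $|S|\geq \alpha|B|$, subsets $T_0,T_1 \subseteq T$ with $|T_0|,|T_1| \ge \frac12\alpha^2|T|$, and real numbers $d_0,d_1$ with $d_1-d_0 \geq\frac{\alpha}{4}|S|$, such that every $h\in T_0$ satisfies $e(h,S)\leq d_0$ and every $h \in T_1$ satisfies $e(h,S)\geq d_1$.
   Context: For a bipartite graph $(A,B,E)$ and sets $S\subseteq B$, $T\subseteq A$, $e(S,T)$ (also written $e(T,S)$) denotes the number of edges with one endpoint in $S$ and the other in $T$; for a single vertex $h$ we write $e(h,S)=e(\{h\},S)$. The density is $d(S,T)=\frac{e(S,T)}{|S||T|}$. *)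

theory Defs
  imports Complex_Main
begin

definition edges_between :: "('a \<times> 'b) set \<Rightarrow> 'b set \<Rightarrow> 'a set \<Rightarrow> nat" where
  "edges_between E S T = card {(a, b) \<in> E. a \<in> T \<and> b \<in> S}"

definition density :: "('a \<times> 'b) set \<Rightarrow> 'b set \<Rightarrow> 'a set \<Rightarrow> real" where
  "density E S T = real (edges_between E S T) / (real (card S) * real (card T))"

definition separable :: "'a set \<Rightarrow> 'b set \<Rightarrow> ('a \<times> 'b) set \<Rightarrow> real \<Rightarrow> 'a set \<Rightarrow> bool" where
  "separable A B E \<alpha> T \<longleftrightarrow>
     (\<exists>S T0 T1. S \<subseteq> B \<and> real (card S) \<ge> \<alpha> * real (card B) \<and>
        T0 \<subseteq> T \<and> T1 \<subseteq> T \<and> T0 \<inter> T1 = {} \<and>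
        real (card T0) \<ge> \<alpha> * real (card T) \<and> real (card T1) \<ge> \<alpha> * real (card T) \<and>
        \<bar>density E S T0 - density E S T1\<bar> \<ge> \<alpha>)"

end

theory Submission
  imports Defs
begin

text \<open>The density gap is a gap of at least \<open>\<alpha>|S|\<close> between the mean degrees into S of
  the two sides. By Markov's inequality, at least an \<open>\<alpha>/2\<close> fraction of the low side has
  degree at most \<open>2/(2-\<alpha>)\<close> times its mean, and likewise on the high side for the
  co-degree \<open>|S| - deg\<close>; the two resulting thresholds are still \<open>\<alpha>/(2-\<alpha>)\<cdot>|S|\<close> apart.\<close>

lemma card_greater_mult_le_sum:
  fixes f :: "'a \<Rightarrow> real"
  assumes "finite P" and "\<forall>h\<in>P. 0 \<le> f h"
  shows "real (card {h\<in>P. c < f h}) * c \<le> (\<Sum>h\<in>P. f h)"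
proof -
  have "real (card {h\<in>P. c < f h}) * c = (\<Sum>h\<in>{h\<in>P. c < f h}. c)"
    by simp
  also have "\<dots> \<le> (\<Sum>h\<in>{h\<in>P. c < f h}. f h)"
    by (rule sum_mono) simp
  also have "\<dots> \<le> (\<Sum>h\<in>P. f h)"
    using assms by (intro sum_mono2) auto
  finally show ?thesis .
qed

lemma card_below_scaled_mean:
  fixes f :: "'a \<Rightarrow> real"
  assumes fin: "finite P" and nonneg: "\<forall>h\<in>P. 0 \<le> f h" and "\<alpha> < 2"
  defines "c \<equiv> 2 * ((\<Sum>h\<in>P. f h) / card P) / (2 - \<alpha>)"
  shows "\<alpha> / 2 * card P \<le> card {h\<in>P. f h \<le> c}"
proof -
  define n where "n = real (card P)"
  have "card P = card ({h\<in>P. f h \<le> c} \<union> {h\<in>P. c < f h})"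
    by (rule arg_cong[where f = card]) auto
  also have "\<dots> = card {h\<in>P. f h \<le> c} + card {h\<in>P. c < f h}"
    using fin by (intro card_Un_disjoint) auto
  finally have split: "real (card {h\<in>P. f h \<le> c}) + real (card {h\<in>P. c < f h}) = n"
    unfolding n_def by simp
  have "0 \<le> (\<Sum>h\<in>P. f h)"
    using nonneg by (simp add: sum_nonneg)
  then consider "(\<Sum>h\<in>P. f h) = 0" | "(\<Sum>h\<in>P. f h) > 0"
    by linarith
  then show ?thesis
  proof cases
    case 1
    then have "{h\<in>P. f h \<le> c} = P"
      using fin nonneg unfolding c_def by (auto simp: sum_nonneg_eq_0_iff)
    then show ?thesis
      using mult_right_mono[of "\<alpha> / 2" 1 "real (card P)"] \<open>\<alpha> < 2\<close> by simp
  next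
    case 2
    then have "n > 0"
      unfolding n_def using fin by (cases "P = {}") auto
    with 2 have "c > 0"
      unfolding c_def n_def using \<open>\<alpha> < 2\<close> by simp
    have "c * ((2 - \<alpha>) / 2 * n) = (\<Sum>h\<in>P. f h)"
      unfolding c_def n_def using \<open>n > 0\<close> \<open>\<alpha> < 2\<close> by (simp add: field_simps n_def)
    then have "real (card {h\<in>P. c < f h}) * c \<le> c * ((2 - \<alpha>) / 2 * n)"
      using card_greater_mult_le_sum[OF fin nonneg, of c] by simp
    then have "real (card {h\<in>P. c < f h}) \<le> (2 - \<alpha>) / 2 * n"
      using \<open>c > 0\<close> by (simp add: mult.commute)
    then show ?thesis
      using split unfolding n_def by (simp add: algebra_simps)
  qed
qed

lemma card_above_scaled_mean:
  fixes f :: "'a \<Rightarrow> real"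
  assumes fin: "finite P" and bounded: "\<forall>h\<in>P. f h \<le> s" and "\<alpha> < 2"
  defines "c \<equiv> s - 2 * (s - (\<Sum>h\<in>P. f h) / card P) / (2 - \<alpha>)"
  shows "\<alpha> / 2 * card P \<le> card {h\<in>P. c \<le> f h}"
proof (cases "P = {}")
  case False
  have mean: "(\<Sum>h\<in>P. s - f h) / card P = s - (\<Sum>h\<in>P. f h) / card P"
    using fin False by (simp add: sum_subtractf field_simps)
  have "{h\<in>P. s - f h \<le> 2 * ((\<Sum>h\<in>P. s - f h) / card P) / (2 - \<alpha>)} = {h\<in>P. c \<le> f h}"
    unfolding mean c_def by auto
  then show ?thesis
    using card_below_scaled_mean[OF fin _ \<open>\<alpha> < 2\<close>, of "\<lambda>h. s - f h"] bounded by simp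
qed simp

lemma edges_between_eq_sum_singletons:
  assumes "finite E" and "finite P"
  shows "edges_between E S P = (\<Sum>h\<in>P. edges_between E S {h})"
proof -
  have "{(a, b) \<in> E. a \<in> P \<and> b \<in> S} = (\<Union>h\<in>P. {(a, b) \<in> E. a \<in> {h} \<and> b \<in> S})"
    by auto
  moreover have "card (\<Union>h\<in>P. {(a, b) \<in> E. a \<in> {h} \<and> b \<in> S})
      = (\<Sum>h\<in>P. card {(a, b) \<in> E. a \<in> {h} \<and> b \<in> S})"
    using assms by (intro card_UN_disjoint) (auto intro: rev_finite_subset[OF assms(1)])
  ultimately show ?thesis
    unfolding edges_between_def by simp
qed

lemma edges_between_singleton_le:
  assumes "finite S"
  shows "edges_between E S {h} \<le> card S"
proof -
  have "{(a, b) \<in> E. a \<in> {h} \<and> b \<in> S} \<subseteq> Pair h ` S"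
    by auto
  then have "edges_between E S {h} \<le> card (Pair h ` S)"
    unfolding edges_between_def using assms by (intro card_mono) auto
  also have "\<dots> \<le> card S"
    by (rule card_image_le[OF assms])
  finally show ?thesis .
qed

lemma density_eq_mean_degree:
  assumes "finite E" and "finite P"
  shows "density E S P = (\<Sum>h\<in>P. real (edges_between E S {h})) / card P / card S"
  unfolding density_def edges_between_eq_sum_singletons[OF assms] by simp

lemma degree_thresholds_of_density_gap:
  assumes "finite E" and "finite S" and "finite P" and "finite Q"
    and "0 < \<alpha>" and "\<alpha> < 2"
    and gap: "\<alpha> \<le> density E S Q - density E S P"
  shows "\<exists>T0 T1 d0 d1. T0 \<subseteq> P \<and> T1 \<subseteq> Q \<and>
           \<alpha> / 2 * card P \<le> card T0 \<and> \<alpha> / 2 * card Q \<le> card T1 \<and>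
           \<alpha> / (2 - \<alpha>) * card S \<le> d1 - d0 \<and>
           (\<forall>h\<in>T0. real (edges_between E S {h}) \<le> d0) \<and>
           (\<forall>h\<in>T1. d1 \<le> real (edges_between E S {h}))"
proof -
  define s where "s = real (card S)"
  define deg where "deg h = real (edges_between E S {h})" for h
  define \<mu>P where "\<mu>P = (\<Sum>h\<in>P. deg h) / card P"
  define \<mu>Q where "\<mu>Q = (\<Sum>h\<in>Q. deg h) / card Q"
  define d0 where "d0 = 2 * \<mu>P / (2 - \<alpha>)"
  define d1 where "d1 = s - 2 * (s - \<mu>Q) / (2 - \<alpha>)"
  have "\<alpha> \<le> \<mu>Q / s - \<mu>P / s"
    using gap unfolding \<mu>P_def \<mu>Q_def deg_def s_def
    by (simp add: density_eq_mean_degree assms(1,3,4))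
  moreover have "s > 0"
    using calculation \<open>0 < \<alpha>\<close> unfolding s_def by (cases "card S = 0") auto
  ultimately have mean_gap: "\<alpha> * s \<le> \<mu>Q - \<mu>P"
    by (simp add: field_simps diff_divide_distrib[symmetric])
  have "d1 - d0 = s - 2 * (s - (\<mu>Q - \<mu>P)) / (2 - \<alpha>)"
    unfolding d0_def d1_def by (simp add: diff_divide_distrib add_divide_distrib algebra_simps)
  also have "\<dots> \<ge> s - 2 * (s - \<alpha> * s) / (2 - \<alpha>)"
    using mean_gap \<open>\<alpha> < 2\<close> by (intro diff_left_mono divide_right_mono) auto
  moreover have "s - 2 * (s - \<alpha> * s) / (2 - \<alpha>) = \<alpha> / (2 - \<alpha>) * s"
    using \<open>\<alpha> < 2\<close> by (simp add: field_simps)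
  ultimately have "\<alpha> / (2 - \<alpha>) * card S \<le> d1 - d0"
    unfolding s_def by linarith
  moreover have "\<alpha> / 2 * card P \<le> card {h\<in>P. deg h \<le> d0}"
    using card_below_scaled_mean[OF assms(3) _ \<open>\<alpha> < 2\<close>, of deg]
    unfolding d0_def \<mu>P_def deg_def by simp
  moreover have "\<alpha> / 2 * card Q \<le> card {h\<in>Q. d1 \<le> deg h}"
    using card_above_scaled_mean[OF assms(4) _ \<open>\<alpha> < 2\<close>, of deg s]
    unfolding d1_def \<mu>Q_def deg_def s_def by (simp add: edges_between_singleton_le[OF assms(2)])
  ultimately show ?thesis
    by (intro exI[where x = "{h\<in>P. deg h \<le> d0}"] exI[where x = "{h\<in>Q. d1 \<le> deg h}"]
        exI[where x = d0] exI[where x = d1]) (auto simp: deg_def)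
qed

lemma separableE:
  assumes "separable A B E \<alpha> T"
  obtains S P Q where "S \<subseteq> B" "\<alpha> * card B \<le> card S"
    and "P \<subseteq> T" "Q \<subseteq> T" "\<alpha> * card T \<le> card P" "\<alpha> * card T \<le> card Q"
    and "\<alpha> \<le> density E S Q - density E S P"
proof -
  obtain S T0 T1 where "S \<subseteq> B" "\<alpha> * card B \<le> card S"
    and "T0 \<subseteq> T" "T1 \<subseteq> T" "\<alpha> * card T \<le> card T0" "\<alpha> * card T \<le> card T1"
    and "\<alpha> \<le> \<bar>density E S T0 - density E S T1\<bar>"
    using assms unfolding separable_def by blast
  moreover from this(7)
  consider "\<alpha> \<le> density E S T1 - density E S T0" | "\<alpha> \<le> density E S T0 - density E S T1"
    by arith
  ultimately show ?thesis
    using that[of S T0 T1] that[of S T1 T0] by metis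
qed

theorem claim4:
  fixes A :: "'a set" and B :: "'b set" and E :: "('a \<times> 'b) set" and \<alpha> :: real and T :: "'a set"
  assumes "finite A" and "finite B" and "E \<subseteq> A \<times> B"
    and "0 < \<alpha>" and "\<alpha> < 1"
    and "T \<subseteq> A"
    and "separable A B E \<alpha> T"
  shows "\<exists>S T0 T1 (d0::real) (d1::real).
           S \<subseteq> B \<and> real (card S) \<ge> \<alpha> * real (card B) \<and>
           T0 \<subseteq> T \<and> T1 \<subseteq> T \<and>
           real (card T0) \<ge> 1/2 * \<alpha>^2 * real (card T) \<and>
           real (card T1) \<ge> 1/2 * \<alpha>^2 * real (card T) \<and>
           d1 - d0 \<ge> \<alpha> / 4 * real (card S) \<and>
           (\<forall>h\<in>T0. real (edges_between E S {h}) \<le> d0) \<and>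
           (\<forall>h\<in>T1. real (edges_between E S {h}) \<ge> d1)"
proof -
  obtain S P Q where S: "S \<subseteq> B" "\<alpha> * card B \<le> card S"
    and PQ: "P \<subseteq> T" "Q \<subseteq> T" "\<alpha> * card T \<le> card P" "\<alpha> * card T \<le> card Q"
    and gap: "\<alpha> \<le> density E S Q - density E S P"
    by (rule separableE[OF \<open>separable A B E \<alpha> T\<close>])
  have "finite T"
    using assms(1,6) by (rule finite_subset[rotated])
  then have fin: "finite E" "finite S" "finite P" "finite Q"
    using finite_subset[OF assms(3)] finite_subset[OF S(1)] finite_subset[OF PQ(1)]
      finite_subset[OF PQ(2)] assms(1,2) by auto
  obtain T0 T1 d0 d1 where T01: "T0 \<subseteq> P" "T1 \<subseteq> Q"
      "\<alpha> / 2 * card P \<le> card T0" "\<alpha> / 2 * card Q \<le> card T1"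
    and d01: "\<alpha> / (2 - \<alpha>) * card S \<le> d1 - d0"
    and deg: "\<forall>h\<in>T0. real (edges_between E S {h}) \<le> d0" "\<forall>h\<in>T1. d1 \<le> real (edges_between E S {h})"
    using degree_thresholds_of_density_gap[OF fin \<open>0 < \<alpha>\<close> _ gap] \<open>\<alpha> < 1\<close> by auto
  have "1/2 * \<alpha>^2 * card T = \<alpha> / 2 * (\<alpha> * card T)"
    by (simp add: power2_eq_square)
  moreover have "\<alpha> / 2 * (\<alpha> * card T) \<le> \<alpha> / 2 * card P"
    "\<alpha> / 2 * (\<alpha> * card T) \<le> \<alpha> / 2 * card Q"
    using PQ(3,4) \<open>0 < \<alpha>\<close> by (auto intro!: mult_left_mono)
  ultimately have "1/2 * \<alpha>^2 * card T \<le> card T0" "1/2 * \<alpha>^2 * card T \<le> card T1"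
    using T01(3,4) by linarith+
  moreover have "\<alpha> / 4 * card S \<le> d1 - d0"
  proof -
    have "\<alpha> / 4 \<le> \<alpha> / (2 - \<alpha>)"
      using \<open>0 < \<alpha>\<close> \<open>\<alpha> < 1\<close> by (intro divide_left_mono) auto
    then show ?thesis
      using d01 mult_right_mono[of "\<alpha> / 4" "\<alpha> / (2 - \<alpha>)" "real (card S)"] by linarith
  qed
  moreover have "T0 \<subseteq> T" "T1 \<subseteq> T"
    using T01(1,2) PQ(1,2) by auto
  ultimately show ?thesis
    using S deg by blast
qed

end
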